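(* Let $n,s$ be positive integers with $2s\le n$ and let $L=[s]=\{1,\ldots,s\}$. Let $\mathcal{F}\subseteq2^{[n]}$ be $L$-close Sperner (respectively, $L$-differencing Sperner). Then there exists $\mathcal{F}'\subseteq2^{[n]}$ with $|\mathcal{F}'|=|\mathcal{F}|$, such that $s\le|A|\le n-s$ for every $A\in\mathcal{F}'$, and $\mathcal{F}'$ is $L$-close Sperner (respectively, $L$-differencing Sperner).
   Context: $\mathcal{F}\subseteq2^{[n]}$ is $L$-differencing Sperner if $|A\setminus B|\in L$ for all distinct $A,B\in\mathcal{F}$, and $L$-close Sperner if $\min\{|A\setminus B|,|B\setminus A|\}\in L$ for all distinct $A,B\in\mathcal{F}$. *)

theory Defs
  imports Main
begin

definition L_differencing_sperner :: "nat set \<Rightarrow> 'a set set \<Rightarrow> bool" where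
  "L_differencing_sperner L F \<longleftrightarrow> (\<forall>A\<in>F. \<forall>B\<in>F. A \<noteq> B \<longrightarrow> card (A - B) \<in> L)"

definition L_close_sperner :: "nat set \<Rightarrow> 'a set set \<Rightarrow> bool" where
  "L_close_sperner L F \<longleftrightarrow> (\<forall>A\<in>F. \<forall>B\<in>F. A \<noteq> B \<longrightarrow> min (card (A - B)) (card (B - A)) \<in> L)"

end

theory Submission
  imports Defs
begin

text \<open>
  Both conditions forbid proper inclusions (they would give \<open>|A - B| = 0\<close>), so \<open>F\<close> is an
  antichain. For \<open>2k < n\<close> the upper shadow of a \<open>k\<close>-uniform family is at least as large as the
  family (double counting), so the lowest layer of an antichain can be replaced by equally many
  \<open>(k+1)\<close>-sets, each containing an old member, without creating inclusions. Iterating up to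
  level \<open>s\<close>, and then doing the same for complements down to level \<open>n - s\<close>, ties every new
  set \<open>X\<close> to some \<open>A \<in> F\<close> with \<open>A \<subseteq> X\<close> unless \<open>|X| = n - s\<close> and \<open>X \<subseteq> A\<close> unless
  \<open>|X| = s\<close>. On the extreme levels \<open>|X - Y| \<le> |X| = s\<close> or \<open>|Y - X| \<le> n - |X| = s\<close>;
  otherwise \<open>X - Y \<subseteq> A - B\<close>, and for the close version \<open>X = A\<close>, \<open>Y = B\<close> outright.
\<close>

definition antichain :: "'a set set \<Rightarrow> bool" where
  "antichain F \<longleftrightarrow> (\<forall>A\<in>F. \<forall>B\<in>F. A \<subseteq> B \<longrightarrow> A = B)"

definition up_shadow :: "'a set \<Rightarrow> 'a set set \<Rightarrow> 'a set set" where
  "up_shadow U G = {insert x A |A x. A \<in> G \<and> x \<in> U - A}"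

lemma up_shadowE:
  assumes "C \<in> up_shadow U G" "G \<subseteq> Pow U" "finite U"
  obtains A where "A \<in> G" "A \<subset> C" "C \<subseteq> U" "card C = Suc (card A)"
proof -
  obtain A x where "C = insert x A" "A \<in> G" "x \<in> U" "x \<notin> A"
    using assms(1) unfolding up_shadow_def by blast
  moreover have "finite A" using \<open>A \<in> G\<close> assms(2,3) by (meson PowD finite_subset subsetD)
  ultimately show thesis using that assms(2) by auto
qed

lemma card_le_card_up_shadow:
  assumes U: "finite U" and G: "G \<subseteq> Pow U" and uniform: "\<forall>A\<in>G. card A = k"
    and k: "2 * k < card U"
  shows "card G \<le> card (up_shadow U G)"
proof -
  define S where "S = up_shadow U G"
  have finite_PowU: "finite (Pow U)" using U by simp
  have "S \<subseteq> Pow U" using G by (auto simp: S_def up_shadow_def)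
  then have "finite S" using finite_PowU finite_subset by blast
  have card_S: "card C = Suc k" if "C \<in> S" for C
  proof -
    obtain A where "A \<in> G" "card C = Suc (card A)"
      using \<open>C \<in> S\<close> G U unfolding S_def by (rule up_shadowE)
    then show ?thesis using uniform by simp
  qed
  have finite_members: "finite C" if "C \<in> S" for C
    using card_S[OF that] by (simp add: card_ge_0_finite)
  have "finite G" using G finite_PowU finite_subset by blast
  \<comment> \<open>Each \<open>C \<in> S\<close> arises as \<open>insert x A\<close> from at most \<open>|C| = k + 1\<close> pairs \<open>(A, x)\<close>.\<close>
  have "card (U - A) = card U - k" if "A \<in> G" for A
    using that G uniform U by (subst card_Diff_subset) (auto intro: finite_subset)
  then have "card G * (card U - k) = card (SIGMA A:G. U - A)"
    using \<open>finite G\<close> U by simp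
  also have "\<dots> \<le> card (SIGMA C:S. C)"
  proof (rule card_inj_on_le)
    show "inj_on (\<lambda>(A, x). (insert x A, x)) (SIGMA A:G. U - A)"
      by (rule inj_on_inverseI[where g = "\<lambda>(C, x). (C - {x}, x)"]) auto
    show "(\<lambda>(A, x). (insert x A, x)) ` (SIGMA A:G. U - A) \<subseteq> (SIGMA C:S. C)"
      by (auto simp: S_def up_shadow_def)
    show "finite (SIGMA C:S. C)"
      using \<open>finite S\<close> finite_members by (rule finite_SigmaI)
  qed
  also have "\<dots> = (\<Sum>C\<in>S. Suc k)"
    using \<open>finite S\<close> finite_members card_S by simp
  also have "\<dots> = card S * Suc k"
    by simp
  finally have "card G * (card U - k) \<le> card S * Suc k" .
  moreover have "card G * Suc k \<le> card G * (card U - k)"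
    using k by (intro mult_le_mono2) simp
  ultimately have "card G * Suc k \<le> card S * Suc k" by linarith
  then show ?thesis unfolding S_def using mult_le_cancel2 by blast
qed

lemma antichain_Un_supersets:
  assumes F: "antichain F" "H \<subseteq> F" "\<forall>A\<in>H. m \<le> card A"
    and G': "\<And>X. X \<in> G' \<Longrightarrow> finite X \<and> card X = m \<and> (\<exists>A\<in>F. A \<subset> X)"
  shows "antichain (H \<union> G')"
  unfolding antichain_def
proof (intro ballI impI)
  fix X Y assume "X \<in> H \<union> G'" "Y \<in> H \<union> G'" "X \<subseteq> Y"
  show "X = Y"
  proof (cases "Y \<in> G'")
    case True
    then have "finite Y" "card Y \<le> card X" using \<open>X \<in> H \<union> G'\<close> F(3) G' by auto
    then show ?thesis using card_seteq[OF _ \<open>X \<subseteq> Y\<close>] by simp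
  next
    case False
    then have "Y \<in> F" using \<open>Y \<in> H \<union> G'\<close> F(2) by blast
    show ?thesis
    proof (cases "X \<in> G'")
      case True
      then obtain A where "A \<in> F" "A \<subset> X" using G' by blast
      moreover have "A \<subset> Y" using \<open>A \<subset> X\<close> \<open>X \<subseteq> Y\<close> by blast
      ultimately show ?thesis using \<open>Y \<in> F\<close> F(1) unfolding antichain_def by blast
    next
      case False
      then have "X \<in> F" using \<open>X \<in> H \<union> G'\<close> F(2) by blast
      then show ?thesis using \<open>Y \<in> F\<close> \<open>X \<subseteq> Y\<close> F(1) unfolding antichain_def by blast
    qed
  qed
qed

lemma lift_lowest_layer:
  assumes U: "finite U" and F: "F \<subseteq> Pow U" "antichain F"
    and above_k: "\<forall>A\<in>F. k \<le> card A" and k: "2 * k < card U"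
  shows "\<exists>F'. F' \<subseteq> Pow U \<and> antichain F' \<and> card F' = card F \<and>
           (\<forall>X\<in>F'. Suc k \<le> card X \<and> (\<exists>A\<in>F. A \<subseteq> X \<and> (X = A \<or> card X = Suc k)))"
proof -
  define G where "G = {A\<in>F. card A = k}"
  have "G \<subseteq> F" "G \<subseteq> Pow U" using F by (auto simp: G_def)
  have "finite F" using F U by (meson finite_Pow_iff finite_subset)
  have "card G \<le> card (up_shadow U G)"
    using U \<open>G \<subseteq> Pow U\<close> k by (intro card_le_card_up_shadow) (auto simp: G_def)
  then obtain G' where G': "G' \<subseteq> up_shadow U G" "card G' = card G" "finite G'"
    by (rule obtain_subset_with_card_n)
  have lifted: "X \<subseteq> U \<and> finite X \<and> card X = Suc k \<and> (\<exists>A\<in>F. A \<subset> X)" if "X \<in> G'" for X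
  proof -
    from that G'(1) have "X \<in> up_shadow U G" by blast
    then obtain A where "A \<in> G" "A \<subset> X" "X \<subseteq> U" "card X = Suc (card A)"
      using \<open>G \<subseteq> Pow U\<close> U by (rule up_shadowE)
    then show ?thesis using U by (auto simp: G_def intro: finite_subset)
  qed
  have "X \<notin> F" if "X \<in> G'" for X
  proof
    assume "X \<in> F"
    obtain A where "A \<in> F" "A \<subset> X" using lifted \<open>X \<in> G'\<close> by blast
    then show False using \<open>X \<in> F\<close> F(2) unfolding antichain_def by blast
  qed
  then have "G' \<inter> F = {}" by blast
  define F' where "F' = (F - G) \<union> G'"
  have above_Suc_k: "\<forall>A\<in>F - G. Suc k \<le> card A"
    using above_k by (fastforce simp: G_def)
  have "antichain F'"
    unfolding F'_def by (rule antichain_Un_supersets[OF F(2) _ above_Suc_k lifted[THEN conjunct2]]) blast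
  moreover have "card F' = card F"
  proof -
    have "card F' = card (F - G) + card G'"
      unfolding F'_def using \<open>G' \<inter> F = {}\<close> \<open>finite F\<close> G'(3) by (subst card_Un_disjoint) auto
    also have "\<dots> = card F"
      using \<open>finite F\<close> \<open>G \<subseteq> F\<close> G'(2) by (simp add: card_Diff_subset card_mono finite_subset)
    finally show ?thesis .
  qed
  moreover have "Suc k \<le> card X \<and> (\<exists>A\<in>F. A \<subseteq> X \<and> (X = A \<or> card X = Suc k))" if "X \<in> F'" for X
  proof (cases "X \<in> G'")
    case True
    then obtain A where "A \<in> F" "A \<subset> X" "card X = Suc k" using lifted by blast
    then show ?thesis by (intro conjI bexI[of _ A]) auto
  next
    case False
    then have "X \<in> F - G" using that by (simp add: F'_def)
    then show ?thesis using above_Suc_k by (intro conjI bexI[of _ X]) auto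
  qed
  moreover have "F' \<subseteq> Pow U" using F lifted by (fastforce simp: F'_def)
  ultimately show ?thesis by blast
qed

lemma antichain_lift_to_level:
  assumes U: "finite U" and F: "F \<subseteq> Pow U" "antichain F" and t: "2 * t \<le> card U"
  shows "\<exists>F'. F' \<subseteq> Pow U \<and> antichain F' \<and> card F' = card F \<and>
           (\<forall>X\<in>F'. t \<le> card X \<and> (\<exists>A\<in>F. A \<subseteq> X \<and> (X = A \<or> card X \<le> t)))"
  using t
proof (induction t)
  case 0
  show ?case using F by (intro exI[of _ F]) auto
next
  case (Suc t)
  then obtain F1 where F1: "F1 \<subseteq> Pow U" "antichain F1" "card F1 = card F"
    "\<forall>Y\<in>F1. t \<le> card Y \<and> (\<exists>A\<in>F. A \<subseteq> Y \<and> (Y = A \<or> card Y \<le> t))"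
    by auto
  obtain F2 where F2: "F2 \<subseteq> Pow U" "antichain F2" "card F2 = card F1"
    "\<forall>X\<in>F2. Suc t \<le> card X \<and> (\<exists>Y\<in>F1. Y \<subseteq> X \<and> (X = Y \<or> card X = Suc t))"
    using lift_lowest_layer[OF U F1(1,2), of t] F1(4) Suc.prems by auto
  have "\<exists>A\<in>F. A \<subseteq> X \<and> (X = A \<or> card X \<le> Suc t)" if "X \<in> F2" for X
  proof -
    obtain Y where "Y \<in> F1" "Y \<subseteq> X" "X = Y \<or> card X = Suc t" using F2(4) \<open>X \<in> F2\<close> by blast
    moreover obtain A where "A \<in> F" "A \<subseteq> Y" "Y = A \<or> card Y \<le> t" using F1(4) \<open>Y \<in> F1\<close> by blast
    ultimately show ?thesis by (intro bexI[of _ A]) auto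
  qed
  then show ?case using F1(3) F2 by (intro exI[of _ F2]) auto
qed

lemma antichain_image_complement:
  assumes "F \<subseteq> Pow U" "antichain F"
  shows "antichain ((\<lambda>X. U - X) ` F)"
  unfolding antichain_def
proof (intro ballI impI)
  fix X Y assume "X \<in> (\<lambda>X. U - X) ` F" "Y \<in> (\<lambda>X. U - X) ` F" "X \<subseteq> Y"
  then obtain A B where "A \<in> F" "B \<in> F" "X = U - A" "Y = U - B" by blast
  moreover from this have "B \<subseteq> A" using \<open>X \<subseteq> Y\<close> assms(1) by blast
  ultimately show "X = Y" using assms(2) unfolding antichain_def by blast
qed

lemma card_image_complement:
  assumes "F \<subseteq> Pow U"
  shows "card ((\<lambda>X. U - X) ` F) = card F"
proof (rule card_image)
  show "inj_on (\<lambda>X. U - X) F"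
    using assms by (intro inj_on_inverseI[where g = "\<lambda>X. U - X"]) (auto simp: double_diff)
qed

lemma antichain_lower_to_level:
  assumes U: "finite U" and F: "F \<subseteq> Pow U" "antichain F" and t: "2 * t \<le> card U"
  shows "\<exists>F'. F' \<subseteq> Pow U \<and> antichain F' \<and> card F' = card F \<and>
           (\<forall>X\<in>F'. card X \<le> card U - t \<and> (\<exists>A\<in>F. X \<subseteq> A \<and> (X = A \<or> card U - t \<le> card X)))"
proof -
  let ?c = "\<lambda>X. U - X"
  have "?c ` F \<subseteq> Pow U" by blast
  then obtain F1 where F1: "F1 \<subseteq> Pow U" "antichain F1" "card F1 = card (?c ` F)"
    "\<forall>Y\<in>F1. t \<le> card Y \<and> (\<exists>A'\<in>?c ` F. A' \<subseteq> Y \<and> (Y = A' \<or> card Y \<le> t))"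
    using antichain_lift_to_level[OF U _ antichain_image_complement[OF F] t] by blast
  have "card X \<le> card U - t \<and> (\<exists>A\<in>F. X \<subseteq> A \<and> (X = A \<or> card U - t \<le> card X))"
    if "X \<in> ?c ` F1" for X
  proof -
    obtain Y where "Y \<in> F1" and X: "X = U - Y" using \<open>X \<in> ?c ` F1\<close> by blast
    then obtain A where "A \<in> F" "U - A \<subseteq> Y" "Y = U - A \<or> card Y \<le> t" "t \<le> card Y"
      using F1(4) by blast
    have "A \<subseteq> U" using \<open>A \<in> F\<close> F(1) by blast
    have card_X: "card X = card U - card Y"
      unfolding X using \<open>Y \<in> F1\<close> F1(1) U by (subst card_Diff_subset) (auto intro: finite_subset)
    have "X \<subseteq> A" using \<open>U - A \<subseteq> Y\<close> \<open>A \<subseteq> U\<close> unfolding X by blast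
    moreover have "X = A \<or> card U - t \<le> card X"
    proof (cases "Y = U - A")
      case True
      then show ?thesis using \<open>A \<subseteq> U\<close> unfolding X by (simp add: double_diff)
    next
      case False
      then show ?thesis using \<open>Y = U - A \<or> card Y \<le> t\<close> card_X by (simp add: diff_le_mono2)
    qed
    moreover have "card X \<le> card U - t" using \<open>t \<le> card Y\<close> card_X by simp
    ultimately show ?thesis using \<open>A \<in> F\<close> by blast
  qed
  moreover have "card (?c ` F1) = card F"
    using F1(1,3) F(1) by (simp add: card_image_complement)
  ultimately show ?thesis
    using antichain_image_complement[OF F1(1,2)] by (intro exI[of _ "?c ` F1"]) auto
qed

lemma antichain_squeeze_to_middle:
  assumes U: "finite U" and F: "F \<subseteq> Pow U" "antichain F" and s: "2 * s \<le> card U"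
  obtains F' where "F' \<subseteq> Pow U" "antichain F'" "card F' = card F"
    and "\<And>X. X \<in> F' \<Longrightarrow> s \<le> card X \<and> card X \<le> card U - s"
    and "\<And>X. X \<in> F' \<Longrightarrow> \<exists>A\<in>F. (card X \<le> s \<or> X \<subseteq> A) \<and> (card U - s \<le> card X \<or> A \<subseteq> X)"
proof -
  obtain F1 where F1: "F1 \<subseteq> Pow U" "antichain F1" "card F1 = card F"
    "\<forall>Y\<in>F1. s \<le> card Y \<and> (\<exists>A\<in>F. A \<subseteq> Y \<and> (Y = A \<or> card Y \<le> s))"
    using antichain_lift_to_level[OF U F s] by blast
  obtain F2 where F2: "F2 \<subseteq> Pow U" "antichain F2" "card F2 = card F1"
    "\<forall>X\<in>F2. card X \<le> card U - s \<and> (\<exists>Y\<in>F1. X \<subseteq> Y \<and> (X = Y \<or> card U - s \<le> card X))"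
    using antichain_lower_to_level[OF U F1(1,2) s] by blast
  have middle: "s \<le> card X \<and>
        (\<exists>A\<in>F. (card X \<le> s \<or> X \<subseteq> A) \<and> (card U - s \<le> card X \<or> A \<subseteq> X))"
    if "X \<in> F2" for X
  proof -
    obtain Y where "Y \<in> F1" "X \<subseteq> Y" "X = Y \<or> card U - s \<le> card X"
      using F2(4) \<open>X \<in> F2\<close> by blast
    moreover obtain A where "A \<in> F" "A \<subseteq> Y" "Y = A \<or> card Y \<le> s" "s \<le> card Y"
      using F1(4) \<open>Y \<in> F1\<close> by blast
    moreover have "card X \<le> card Y"
      using \<open>Y \<in> F1\<close> F1(1) U \<open>X \<subseteq> Y\<close> by (meson PowD card_mono finite_subset subsetD)
    ultimately show ?thesis using s by (intro conjI bexI[of _ A]) auto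
  qed
  show ?thesis
    by (rule that[of F2]) (use F1(3) F2 middle in auto)
qed

lemma antichain_if_L_close_sperner:
  assumes "L_close_sperner L F" "0 \<notin> L"
  shows "antichain F"
  unfolding antichain_def
proof (intro ballI impI)
  fix A B assume "A \<in> F" "B \<in> F" "A \<subseteq> B"
  show "A = B"
  proof (rule ccontr)
    assume "A \<noteq> B"
    then have "min (card (A - B)) (card (B - A)) \<in> L"
      using assms(1) \<open>A \<in> F\<close> \<open>B \<in> F\<close> unfolding L_close_sperner_def by blast
    moreover have "A - B = {}" using \<open>A \<subseteq> B\<close> by blast
    ultimately show False using assms(2) by simp
  qed
qed

lemma antichain_if_L_differencing_sperner:
  assumes "L_differencing_sperner L F" "0 \<notin> L"
  shows "antichain F"
  unfolding antichain_def
proof (intro ballI impI)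
  fix A B assume "A \<in> F" "B \<in> F" "A \<subseteq> B"
  show "A = B"
  proof (rule ccontr)
    assume "A \<noteq> B"
    then have "card (A - B) \<in> L"
      using assms(1) \<open>A \<in> F\<close> \<open>B \<in> F\<close> unfolding L_differencing_sperner_def by blast
    moreover have "A - B = {}" using \<open>A \<subseteq> B\<close> by blast
    ultimately show False using assms(2) by simp
  qed
qed

lemma antichain_card_Diff_pos:
  assumes "antichain F" "X \<in> F" "Y \<in> F" "X \<noteq> Y" "finite X"
  shows "0 < card (X - Y)"
proof -
  have "\<not> X \<subseteq> Y" using assms(1-4) unfolding antichain_def by blast
  then show ?thesis using assms(5) by (simp add: card_gt_0_iff)
qed

lemma card_Diff_le_card_complement:
  assumes "finite U" "X \<subseteq> U" "Y \<subseteq> U"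
  shows "card (Y - X) \<le> card U - card X"
proof -
  have "card (Y - X) \<le> card (U - X)" using assms by (intro card_mono) auto
  also have "\<dots> = card U - card X" using assms by (simp add: card_Diff_subset finite_subset)
  finally show ?thesis .
qed

lemma min_card_Diff_le_if_extreme:
  assumes "finite U" "X \<subseteq> U" "Y \<subseteq> U" "card X \<le> s \<or> card U - s \<le> card X"
  shows "min (card (X - Y)) (card (Y - X)) \<le> s"
proof (cases "card X \<le> s")
  case True
  moreover have "card (X - Y) \<le> card X"
    using assms(1,2) by (intro card_mono) (auto intro: finite_subset)
  ultimately show ?thesis by simp
next
  case False
  then have "card (Y - X) \<le> s" using assms card_Diff_le_card_complement[of U X Y] by linarith
  then show ?thesis by simp
qed

lemma L_close_sperner_squeezed:
  assumes U: "finite U" and F': "F' \<subseteq> Pow U" "antichain F'" and F: "L_close_sperner {1..s} F"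
    and squeezed: "\<And>X. X \<in> F' \<Longrightarrow>
      \<exists>A\<in>F. (card X \<le> s \<or> X \<subseteq> A) \<and> (card U - s \<le> card X \<or> A \<subseteq> X)"
  shows "L_close_sperner {1..s} F'"
  unfolding L_close_sperner_def
proof (intro ballI impI)
  fix X Y assume "X \<in> F'" "Y \<in> F'" "X \<noteq> Y"
  have "X \<subseteq> U" "Y \<subseteq> U" using \<open>X \<in> F'\<close> \<open>Y \<in> F'\<close> F'(1) by auto
  then have "finite X" "finite Y" using U finite_subset by blast+
  have "0 < card (X - Y)" "0 < card (Y - X)"
    using antichain_card_Diff_pos[OF F'(2)] \<open>X \<in> F'\<close> \<open>Y \<in> F'\<close> \<open>X \<noteq> Y\<close>
      \<open>finite X\<close> \<open>finite Y\<close> by auto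
  moreover have "min (card (X - Y)) (card (Y - X)) \<le> s"
  proof (cases "card X \<le> s \<or> card U - s \<le> card X \<or> card Y \<le> s \<or> card U - s \<le> card Y")
    case True
    then show ?thesis
      using min_card_Diff_le_if_extreme[OF U \<open>X \<subseteq> U\<close> \<open>Y \<subseteq> U\<close>]
        min_card_Diff_le_if_extreme[OF U \<open>Y \<subseteq> U\<close> \<open>X \<subseteq> U\<close>] by (auto simp: min.commute)
  next
    case False
    have "Z \<in> F" if "Z \<in> F'" "\<not> card Z \<le> s" "\<not> card U - s \<le> card Z" for Z
    proof -
      obtain A where "A \<in> F" "card Z \<le> s \<or> Z \<subseteq> A" "card U - s \<le> card Z \<or> A \<subseteq> Z"
        using squeezed[OF \<open>Z \<in> F'\<close>] by blast
      then have "Z = A" using that(2,3) by blast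
      with \<open>A \<in> F\<close> show ?thesis by simp
    qed
    then have "X \<in> F" "Y \<in> F" using False \<open>X \<in> F'\<close> \<open>Y \<in> F'\<close> by blast+
    then show ?thesis using F \<open>X \<noteq> Y\<close> unfolding L_close_sperner_def by fastforce
  qed
  ultimately show "min (card (X - Y)) (card (Y - X)) \<in> {1..s}" by simp
qed

lemma L_differencing_sperner_squeezed:
  assumes U: "finite U" and F': "F' \<subseteq> Pow U" "antichain F'" and F: "L_differencing_sperner {1..s} F"
    and squeezed: "\<And>X. X \<in> F' \<Longrightarrow>
      \<exists>A\<in>F. (card X \<le> s \<or> X \<subseteq> A) \<and> (card U - s \<le> card X \<or> A \<subseteq> X)"
  shows "L_differencing_sperner {1..s} F'"
  unfolding L_differencing_sperner_def
proof (intro ballI impI)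
  fix X Y assume "X \<in> F'" "Y \<in> F'" "X \<noteq> Y"
  have "X \<subseteq> U" "Y \<subseteq> U" using \<open>X \<in> F'\<close> \<open>Y \<in> F'\<close> F'(1) by auto
  then have "finite X" using U finite_subset by blast
  have "0 < card (X - Y)"
    using antichain_card_Diff_pos[OF F'(2) \<open>X \<in> F'\<close> \<open>Y \<in> F'\<close> \<open>X \<noteq> Y\<close> \<open>finite X\<close>] .
  moreover have "card (X - Y) \<le> s"
  proof -
    obtain A where "A \<in> F" "card X \<le> s \<or> X \<subseteq> A" using squeezed[OF \<open>X \<in> F'\<close>] by blast
    obtain B where "B \<in> F" "card U - s \<le> card Y \<or> B \<subseteq> Y" using squeezed[OF \<open>Y \<in> F'\<close>] by blast
    consider "card X \<le> s" | "card U - s \<le> card Y" | "X - Y \<subseteq> A - B"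
      using \<open>card X \<le> s \<or> X \<subseteq> A\<close> \<open>card U - s \<le> card Y \<or> B \<subseteq> Y\<close> by blast
    then show ?thesis
    proof cases
      case 1
      moreover have "card (X - Y) \<le> card X" using \<open>finite X\<close> by (intro card_mono) auto
      ultimately show ?thesis by simp
    next
      case 2
      then show ?thesis
        using card_Diff_le_card_complement[OF U \<open>Y \<subseteq> U\<close> \<open>X \<subseteq> U\<close>] by linarith
    next
      case 3
      show ?thesis
      proof (cases "A = B")
        case True
        then have "X - Y = {}" using 3 by blast
        then show ?thesis by (metis card.empty zero_le)
      next
        case False
        then have "card (A - B) \<in> {1..s}"
          using F \<open>A \<in> F\<close> \<open>B \<in> F\<close> unfolding L_differencing_sperner_def by blast
        then have "finite (A - B)" "card (A - B) \<le> s" by (auto intro: card_ge_0_finite)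
        then show ?thesis using card_mono[OF _ 3] by (meson le_trans)
      qed
    qed
  qed
  ultimately show "card (X - Y) \<in> {1..s}" by simp
qed

lemma L_close_sperner_squeeze_to_middle:
  assumes U: "finite U" and F: "F \<subseteq> Pow U" "L_close_sperner {1..s} F" and s: "2 * s \<le> card U"
  shows "\<exists>F'. F' \<subseteq> Pow U \<and> card F' = card F \<and>
           (\<forall>A\<in>F'. s \<le> card A \<and> card A \<le> card U - s) \<and> L_close_sperner {1..s} F'"
proof -
  have "antichain F" using F(2) by (rule antichain_if_L_close_sperner) simp
  then obtain F' where F': "F' \<subseteq> Pow U" "antichain F'" "card F' = card F"
    and middle: "\<And>X. X \<in> F' \<Longrightarrow> s \<le> card X \<and> card X \<le> card U - s"
    and squeezed: "\<And>X. X \<in> F' \<Longrightarrow>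
      \<exists>A\<in>F. (card X \<le> s \<or> X \<subseteq> A) \<and> (card U - s \<le> card X \<or> A \<subseteq> X)"
    using antichain_squeeze_to_middle[OF U F(1) _ s] by blast
  have "L_close_sperner {1..s} F'"
    using L_close_sperner_squeezed[OF U F'(1,2) F(2)] squeezed by blast
  then show ?thesis using F'(1,3) middle by blast
qed

lemma L_differencing_sperner_squeeze_to_middle:
  assumes U: "finite U" and F: "F \<subseteq> Pow U" "L_differencing_sperner {1..s} F"
    and s: "2 * s \<le> card U"
  shows "\<exists>F'. F' \<subseteq> Pow U \<and> card F' = card F \<and>
           (\<forall>A\<in>F'. s \<le> card A \<and> card A \<le> card U - s) \<and> L_differencing_sperner {1..s} F'"
proof -
  have "antichain F" using F(2) by (rule antichain_if_L_differencing_sperner) simp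
  then obtain F' where F': "F' \<subseteq> Pow U" "antichain F'" "card F' = card F"
    and middle: "\<And>X. X \<in> F' \<Longrightarrow> s \<le> card X \<and> card X \<le> card U - s"
    and squeezed: "\<And>X. X \<in> F' \<Longrightarrow>
      \<exists>A\<in>F. (card X \<le> s \<or> X \<subseteq> A) \<and> (card U - s \<le> card X \<or> A \<subseteq> X)"
    using antichain_squeeze_to_middle[OF U F(1) _ s] by blast
  have "L_differencing_sperner {1..s} F'"
    using L_differencing_sperner_squeezed[OF U F'(1,2) F(2)] squeezed by blast
  then show ?thesis using F'(1,3) middle by blast
qed

theorem mainTheorem10:
  fixes n s :: nat
  assumes "0 < n" and "0 < s" and "2 * s \<le> n"
  shows "(\<forall>F. F \<subseteq> Pow {1..n} \<longrightarrow> L_close_sperner {1..s} F \<longrightarrow>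
            (\<exists>F'. F' \<subseteq> Pow {1..n} \<and> card F' = card F \<and>
                  (\<forall>A\<in>F'. s \<le> card A \<and> card A \<le> n - s) \<and> L_close_sperner {1..s} F'))
       \<and> (\<forall>F. F \<subseteq> Pow {1..n} \<longrightarrow> L_differencing_sperner {1..s} F \<longrightarrow>
            (\<exists>F'. F' \<subseteq> Pow {1..n} \<and> card F' = card F \<and>
                  (\<forall>A\<in>F'. s \<le> card A \<and> card A \<le> n - s) \<and> L_differencing_sperner {1..s} F'))"
proof -
  have U: "finite {1..n}" "2 * s \<le> card {1..n}" and card_U: "card {1..n} = n"
    using \<open>2 * s \<le> n\<close> by simp_all
  show ?thesis
    using L_close_sperner_squeeze_to_middle[OF U(1) _ _ U(2), unfolded card_U]
      L_differencing_sperner_squeeze_to_middle[OF U(1) _ _ U(2), unfolded card_U]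
    by blast
qed

end
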